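(* Let $M$ be a $d$-dimensional victim GNN satisfying the embedding assumption below, and let $\mu_M$ be a probability measure on its set of stationary points $\mathcal{S}(M)$ from which samples can be drawn. Suppose there is $\gamma_M>0$ such that for every independently trained model $I$, $\mu_M(\mathcal{S}(M)\setminus\mathcal{S}(I))\ge\gamma_M$. Let $Z$ be a GNN that is either (i) an independently trained model, or (ii) a surrogate of $M$ with reconstruction error $\epsilon=0$, i.e. its embeddings are $\mathbf{h}_i(G,X;Z)=\phi(\mathbf{h}_i(G,X;M))$ for some differentiable $\phi:\mathbb{R}^d\to\mathbb{R}^{d'}$ satisfying local invertibility: $\nabla_{\mathbf{w}}\phi|_{\mathbf{h}}:=\lim_{t\to0}\frac{\phi(\mathbf{h}+t\mathbf{w})-\phi(\mathbf{h})}{t}\neq\mathbf{0}$ for all $\mathbf{h}\in\mathbb{R}^d$ and unit $\mathbf{w}\in\mathbb{R}^d$. Consider the algorithm: draw a set $T$ of independent samples from $\mathcal{S}(M)$ according to $\mu_M$; output "Surrogate" if $T\subseteq\mathcal{S}(Z)$ and "Independent" otherwise. Then this algorithm outputs the correct answer (Surrogate in case (ii), Independent in case (i)) with probability at least $1-e^{-2|T|\gamma_M^2}$.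
   Context: A graph is a pair $(G,X)$ with $G=(V,E)$ having $n$ nodes, node features $\mathbf{x}_i\in\mathbb{R}^D$, $X=(\mathbf{x}_1,\dots,\mathbf{x}_n)$; $\mathcal{D}$ is a data distribution over feasible pairs $(G,X)$. A $d$-dimensional GNN $F$ maps $(G,X)$ to $\mathbb{R}^{d\times n}$; its $i$-th column $\mathbf{h}_i(G,X;F)$ is the embedding of node $i$. Embedding assumption on $M$: $\mathbf{h}_i(G,X;M)$ is twice-differentiable in $X$ with bounded Hessian and $0<\underline{\alpha}_M\le\|\mathbf{h}_i\|\le\overline{\alpha}_M$ for all feasible $G,X,i$. Query tuples: $\mathcal{Q}=\{(G,X,i,\mathbf{w}) : (G,X)\in\mathrm{supp}(\mathcal{D}),\ i\in\{1,\dots,n\},\ \mathbf{w}\in\mathbb{R}^D,\ \|\mathbf{w}\|=1\}$. For $\tau\in\mathbb{R}$, $\mathbf{h}_i^{(\tau\mathbf{w})}(G,X;F)$ is the embedding of node $i$ when $\mathbf{x}_i$ is replaced by $\mathbf{x}_i+\tau\mathbf{w}$; $\nabla_{\mathbf{w}}\mathbf{h}_i(G,X;F)=\lim_{\tau\to0}(\mathbf{h}_i^{(\tau\mathbf{w})}(G,X;F)-\mathbf{h}_i(G,X;F))/\tau$. The stationary points of $F$ are $\mathcal{S}(F)=\{(G,X,i,\mathbf{w})\in\mathcal{Q} : \|\nabla_{\mathbf{w}}\mathbf{h}_i(G,X;F)\|=0\}$. The probability is over the random draw of $T$. *)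

theory Defs
  imports "HOL-Probability.Probability"
begin

text \<open>Graphs have node set the finite type 'n; a graph structure is an edge set on 'n,
  node features form a matrix X :: real^'D^'n whose row X $ i is the feature of node i.\<close>

type_synonym ('n, 'D, 'd) gnn = "('n \<times> 'n) set \<Rightarrow> real^'D^'n \<Rightarrow> real^'d^'n"

definition emb :: "('n, 'D, 'd) gnn \<Rightarrow> ('n \<times> 'n) set \<Rightarrow> real^'D^'n \<Rightarrow> 'n \<Rightarrow> real^'d" where
  "emb F G X i = F G X $ i"

definition feat_upd :: "real^'D^'n \<Rightarrow> 'n \<Rightarrow> real^'D \<Rightarrow> real^'D^'n" where
  "feat_upd X i v = (\<chi> j. if j = i then X $ j + v else X $ j)"

definition queries :: "(('n \<times> 'n) set \<times> (real^'D^'n)) set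
    \<Rightarrow> (('n \<times> 'n) set \<times> (real^'D^'n) \<times> 'n \<times> (real^'D)) set" where
  "queries Supp = {(G, X, i, w). (G, X) \<in> Supp \<and> norm w = 1}"

definition has_dir_deriv :: "('n::finite, 'D::finite, 'd::finite) gnn \<Rightarrow> ('n \<times> 'n) set \<Rightarrow> real^'D^'n \<Rightarrow> 'n
    \<Rightarrow> real^'D \<Rightarrow> real^'d \<Rightarrow> bool" where
  "has_dir_deriv F G X i w v \<longleftrightarrow>
     ((\<lambda>\<tau>. (emb F G (feat_upd X i (\<tau> *\<^sub>R w)) i - emb F G X i) /\<^sub>R \<tau>) \<longlongrightarrow> v) (at 0)"

definition stationary :: "(('n::finite \<times> 'n) set \<times> (real^'D::finite^'n)) set \<Rightarrow> ('n, 'D, 'd::finite) gnn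
    \<Rightarrow> (('n \<times> 'n) set \<times> (real^'D^'n) \<times> 'n \<times> (real^'D)) set" where
  "stationary Supp F = {(G, X, i, w) \<in> queries Supp.
      \<exists>v. has_dir_deriv F G X i w v \<and> norm v = 0}"

definition embedding_assumption :: "(('n::finite \<times> 'n) set \<times> (real^'D::finite^'n)) set \<Rightarrow> ('n, 'D, 'd::finite) gnn
    \<Rightarrow> real \<Rightarrow> real \<Rightarrow> bool" where
  "embedding_assumption Supp M lo hi \<longleftrightarrow> 0 < lo \<and>
     (\<exists>(D1 :: ('n \<times> 'n) set \<Rightarrow> 'n \<Rightarrow> real^'D^'n \<Rightarrow> ((real^'D^'n) \<Rightarrow>\<^sub>L (real^'d)))
        (D2 :: ('n \<times> 'n) set \<Rightarrow> 'n \<Rightarrow> real^'D^'n \<Rightarrow> real^'D^'n \<Rightarrow> ((real^'D^'n) \<Rightarrow>\<^sub>L (real^'d)))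
        (B :: real).
       \<forall>(G, X) \<in> Supp. \<forall>i.
         (\<forall>Y. ((\<lambda>Y'. emb M G Y' i) has_derivative blinfun_apply (D1 G i Y)) (at Y)) \<and>
         (\<forall>Y. (D1 G i has_derivative D2 G i Y) (at Y)) \<and>
         (\<forall>Y. onorm (D2 G i Y) \<le> B) \<and>
         lo \<le> norm (emb M G X i) \<and> norm (emb M G X i) \<le> hi)"

end

theory Submission
  imports Defs
begin

text \<open>Since the surrogate embedding is \<open>\<phi>\<close> applied to the victim embedding, the chain rule turns
  every stationary point of \<open>M\<close> into one of \<open>Z\<close>, so the test answers Surrogate with probability 1.
  For an independent model each sample misses the stationary points of \<open>Z\<close> with probability
  \<open>p \<ge> \<gamma>\<close>, so all \<open>m\<close> independent samples hit them with probability
  \<open>(1 - p)^m \<le> exp (-2 m \<gamma>\<^sup>2)\<close>, by the elementary bound \<open>1 - p \<le> exp (-2 p\<^sup>2)\<close> for \<open>p \<ge> 0\<close>.\<close>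

lemma difference_quotient_tendsto_iff_has_vector_derivative:
  fixes g :: "real \<Rightarrow> 'a::real_normed_vector"
  shows "((\<lambda>\<tau>. (g (x + \<tau>) - g x) /\<^sub>R \<tau>) \<longlongrightarrow> v) (at 0) \<longleftrightarrow> (g has_vector_derivative v) (at x)"
proof -
  have eq: "norm (g (x + h) - g x - h *\<^sub>R v) / \<bar>h\<bar> = norm ((g (x + h) - g x) /\<^sub>R h - v)"
    if "h \<noteq> 0" for h
  proof -
    have "g (x + h) - g x - h *\<^sub>R v = h *\<^sub>R ((g (x + h) - g x) /\<^sub>R h - v)"
      using that by (simp add: algebra_simps)
    then show ?thesis using that by simp
  qed
  have "(g has_vector_derivative v) (at x) \<longleftrightarrow>
      ((\<lambda>h. norm (g (x + h) - g x - h *\<^sub>R v) / norm h) \<longlongrightarrow> 0) (at 0)"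
    unfolding has_vector_derivative_def has_derivative_at by (simp add: bounded_linear_scaleR_left)
  also have "\<dots> \<longleftrightarrow> ((\<lambda>h. norm ((g (x + h) - g x) /\<^sub>R h - v)) \<longlongrightarrow> 0) (at 0)"
    by (rule filterlim_cong) (auto simp: eventually_at_filter eq intro!: always_eventually)
  also have "\<dots> \<longleftrightarrow> ((\<lambda>\<tau>. (g (x + \<tau>) - g x) /\<^sub>R \<tau>) \<longlongrightarrow> v) (at 0)"
    by (simp add: tendsto_norm_zero_iff LIM_zero_iff)
  finally show ?thesis ..
qed

lemma feat_upd_zero [simp]: "feat_upd X i 0 = X"
  by (simp add: feat_upd_def vec_eq_iff)

lemma has_dir_deriv_iff_has_vector_derivative:
  "has_dir_deriv F G X i w v \<longleftrightarrow>
    ((\<lambda>\<tau>. emb F G (feat_upd X i (\<tau> *\<^sub>R w)) i) has_vector_derivative v) (at 0)"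
  unfolding has_dir_deriv_def
  using difference_quotient_tendsto_iff_has_vector_derivative
    [of "\<lambda>\<tau>. emb F G (feat_upd X i (\<tau> *\<^sub>R w)) i" 0 v]
  by simp

lemma has_vector_derivative_zero_comp:
  assumes "(g has_vector_derivative 0) (at x)" and "\<phi> differentiable (at (g x))"
  shows "((\<phi> \<circ> g) has_vector_derivative 0) (at x)"
proof -
  obtain D where D: "(\<phi> has_derivative D) (at (g x))"
    using assms(2) by (auto simp: differentiable_def)
  have "((\<phi> \<circ> g) has_vector_derivative D 0) (at x)"
    using vector_derivative_diff_chain_within[OF assms(1) has_derivative_at_withinI[OF D]] by simp
  then show ?thesis
    using linear_0[OF has_derivative_linear[OF D]] by simp
qed

lemma has_dir_deriv_zero_comp:
  assumes "has_dir_deriv M G X i w 0"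
    and "\<phi> differentiable (at (emb M G X i))"
    and "\<And>Y. emb Z G Y i = \<phi> (emb M G Y i)"
  shows "has_dir_deriv Z G X i w 0"
proof -
  let ?g = "\<lambda>\<tau>. emb M G (feat_upd X i (\<tau> *\<^sub>R w)) i"
  have "?g 0 = emb M G X i"
    by simp
  then have "((\<phi> \<circ> ?g) has_vector_derivative 0) (at 0)"
    using assms(1,2) has_vector_derivative_zero_comp[of ?g 0 \<phi>]
    by (simp add: has_dir_deriv_iff_has_vector_derivative)
  then show ?thesis
    by (simp add: has_dir_deriv_iff_has_vector_derivative o_def assms(3))
qed

lemma stationary_subset_of_factor:
  assumes "\<And>h. \<phi> differentiable (at h)"
    and "\<And>G X i. emb Z G X i = \<phi> (emb M G X i)"
  shows "stationary Supp M \<subseteq> stationary Supp Z"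
  using has_dir_deriv_zero_comp[OF _ assms(1) assms(2)]
  by (fastforce simp: stationary_def)

lemma one_minus_le_exp_neg_two_square:
  fixes p :: real
  assumes "0 \<le> p"
  shows "1 - p \<le> exp (- 2 * p\<^sup>2)"
proof -
  let ?f = "\<lambda>x::real. (1 - x) * exp (2 * x\<^sup>2)"
  have deriv: "(?f has_real_derivative - (exp (2 * x\<^sup>2) * (1 - 2 * x)\<^sup>2)) (at x)" for x
    by (auto intro!: derivative_eq_intros simp: power2_eq_square algebra_simps)
  have "?f p \<le> ?f 0"
  proof (rule DERIV_nonpos_imp_nonincreasing[of 0 p ?f])
    show "\<exists>y. DERIV ?f x :> y \<and> y \<le> 0" for x
      by (intro exI[of _ "- (exp (2 * x\<^sup>2) * (1 - 2 * x)\<^sup>2)"] conjI deriv) simp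
  qed (use assms in auto)
  then show ?thesis
    by (simp add: exp_minus field_simps)
qed

lemma (in prob_space) measure_PiM_PiE_const:
  assumes "finite I" and "A \<in> events"
  shows "measure (PiM I (\<lambda>_. M)) (PiE I (\<lambda>_. A)) = prob A ^ card I"
proof -
  interpret P: product_prob_space "\<lambda>_. M" I ..
  have "A \<subseteq> space M"
    using assms(2) by (rule sets.sets_into_space)
  then show ?thesis
    using P.measure_PiM_emb[of I "\<lambda>_. A"] assms by simp
qed

lemma (in prob_space) prob_some_sample_outside_ge:
  assumes "\<gamma> > 0" and gap: "measure M (space M - S) \<ge> \<gamma>"
  shows "measure (PiM {..<m} (\<lambda>_. M))
      {t \<in> space (PiM {..<m} (\<lambda>_. M)). \<not> (\<forall>k<m. t k \<in> S)} \<ge> 1 - exp (- 2 * real m * \<gamma>\<^sup>2)"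
proof -
  let ?P = "PiM {..<m} (\<lambda>_. M)"
  interpret P: prob_space ?P
    by (rule prob_space_PiM) (rule prob_space_axioms)
  define p where "p = prob (space M - S)"
  \<comment> \<open>A set outside \<open>events\<close> has measure \<open>0\<close>, so the gap forces measurability.\<close>
  have B: "space M - S \<in> events"
    using gap \<open>\<gamma> > 0\<close> measure_notin_sets[of "space M - S" M] by force
  have S: "space M \<inter> S \<in> events"
    using sets.compl_sets[OF B] by (simp add: Diff_Diff_Int)
  have prob_S: "prob (space M \<inter> S) = 1 - p"
    using prob_compl[OF B] by (simp add: p_def Diff_Diff_Int)
  have "{t \<in> space ?P. \<not> (\<forall>k<m. t k \<in> S)} = space ?P - PiE {..<m} (\<lambda>_. space M \<inter> S)"
    by (auto simp: space_PiM PiE_def Pi_def)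
  moreover have "PiE {..<m} (\<lambda>_. space M \<inter> S) \<in> P.events"
    using S by (auto intro!: sets_PiM_I_finite)
  ultimately have "measure ?P {t \<in> space ?P. \<not> (\<forall>k<m. t k \<in> S)} = 1 - (1 - p) ^ m"
    using P.prob_compl measure_PiM_PiE_const[OF _ S, of "{..<m}"] prob_S by simp
  moreover have "(1 - p) ^ m \<le> exp (- 2 * \<gamma>\<^sup>2) ^ m"
  proof (rule power_mono)
    have "1 - p \<le> exp (- 2 * p\<^sup>2)"
      using one_minus_le_exp_neg_two_square gap \<open>\<gamma> > 0\<close> p_def by simp
    also have "\<dots> \<le> exp (- 2 * \<gamma>\<^sup>2)"
      using gap \<open>\<gamma> > 0\<close> p_def by (simp add: power_mono)
    finally show "1 - p \<le> exp (- 2 * \<gamma>\<^sup>2)" .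
    show "0 \<le> 1 - p"
      by (simp add: p_def)
  qed
  moreover have "exp (- 2 * \<gamma>\<^sup>2) ^ m = exp (- 2 * real m * \<gamma>\<^sup>2)"
    by (simp add: exp_of_nat_mult[symmetric] algebra_simps)
  ultimately show ?thesis
    by simp
qed

lemma (in prob_space) prob_all_samples_inside:
  assumes "space M \<subseteq> S"
  shows "measure (PiM {..<m} (\<lambda>_. M)) {t \<in> space (PiM {..<m} (\<lambda>_. M)). \<forall>k<m. t k \<in> S} = 1"
proof -
  interpret P: prob_space "PiM {..<m} (\<lambda>_. M)"
    by (rule prob_space_PiM) (rule prob_space_axioms)
  have "\<forall>t \<in> space (PiM {..<m} (\<lambda>_. M)). \<forall>k<m. t k \<in> S"
    using assms by (auto simp: space_PiM dest!: PiE_mem)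
  then have "{t \<in> space (PiM {..<m} (\<lambda>_. M)). \<forall>k<m. t k \<in> S} = space (PiM {..<m} (\<lambda>_. M))"
    by blast
  then show ?thesis
    by (simp add: P.prob_space)
qed

theorem theorem1:
  fixes Supp :: "(('n::finite \<times> 'n) set \<times> (real^'D::finite^'n)) set"
    and M :: "('n, 'D, 'd::finite) gnn"
    and Z :: "('n, 'D, 'e::finite) gnn"
    and Indep :: "('n, 'D, 'e) gnn set"
    and \<mu> :: "(('n \<times> 'n) set \<times> (real^'D^'n) \<times> 'n \<times> (real^'D)) measure"
    and lo hi \<gamma> :: real
    and m :: nat
  assumes emb_M: "embedding_assumption Supp M lo hi"
    and prob: "prob_space \<mu>"
    and space_mu: "space \<mu> = stationary Supp M"
    and gamma_pos: "\<gamma> > 0"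
    and gap: "\<forall>I \<in> Indep. measure \<mu> (stationary Supp M - stationary Supp I) \<ge> \<gamma>"
  shows
    "(Z \<in> Indep \<longrightarrow>
        measure (PiM {..<m} (\<lambda>_. \<mu>))
          {t \<in> space (PiM {..<m} (\<lambda>_. \<mu>)). \<not> (\<forall>k<m. t k \<in> stationary Supp Z)}
        \<ge> 1 - exp (- 2 * real m * \<gamma>\<^sup>2))
     \<and>
     ((\<exists>\<phi> :: real^'d \<Rightarrow> real^'e.
         (\<forall>h. \<phi> differentiable (at h)) \<and>
         (\<forall>h w. norm w = 1 \<longrightarrow>
             \<not> ((\<lambda>t. (\<phi> (h + t *\<^sub>R w) - \<phi> h) /\<^sub>R t) \<longlongrightarrow> 0) (at 0)) \<and>
         (\<forall>G X i. emb Z G X i = \<phi> (emb M G X i)))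
      \<longrightarrow>
        measure (PiM {..<m} (\<lambda>_. \<mu>))
          {t \<in> space (PiM {..<m} (\<lambda>_. \<mu>)). \<forall>k<m. t k \<in> stationary Supp Z}
        \<ge> 1 - exp (- 2 * real m * \<gamma>\<^sup>2))"
proof (intro conjI impI)
  interpret prob_space \<mu>
    by (rule prob)
  assume "Z \<in> Indep"
  then show "measure (PiM {..<m} (\<lambda>_. \<mu>))
      {t \<in> space (PiM {..<m} (\<lambda>_. \<mu>)). \<not> (\<forall>k<m. t k \<in> stationary Supp Z)}
      \<ge> 1 - exp (- 2 * real m * \<gamma>\<^sup>2)"
    using prob_some_sample_outside_ge[OF gamma_pos] gap space_mu by simp
next
  interpret prob_space \<mu>
    by (rule prob)
  assume "\<exists>\<phi> :: real^'d \<Rightarrow> real^'e.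
      (\<forall>h. \<phi> differentiable (at h)) \<and>
      (\<forall>h w. norm w = 1 \<longrightarrow> \<not> ((\<lambda>t. (\<phi> (h + t *\<^sub>R w) - \<phi> h) /\<^sub>R t) \<longlongrightarrow> 0) (at 0)) \<and>
      (\<forall>G X i. emb Z G X i = \<phi> (emb M G X i))"
  then obtain \<phi> :: "real^'d \<Rightarrow> real^'e"
    where "\<forall>h. \<phi> differentiable (at h)" and "\<forall>G X i. emb Z G X i = \<phi> (emb M G X i)"
    by blast
  then have "stationary Supp M \<subseteq> stationary Supp Z"
    by (intro stationary_subset_of_factor) blast+
  then show "measure (PiM {..<m} (\<lambda>_. \<mu>))
      {t \<in> space (PiM {..<m} (\<lambda>_. \<mu>)). \<forall>k<m. t k \<in> stationary Supp Z}
      \<ge> 1 - exp (- 2 * real m * \<gamma>\<^sup>2)"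
    using prob_all_samples_inside[of "stationary Supp Z" m] space_mu by simp
qed

end
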